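(* Let $n\ge 2$, $\rho>0$, and let $F$ be a continuous distribution supported on the non-negative real numbers with a monotone decreasing density $f$ (and positive mean). Then the best-case zero-outage capacity $\overline{R^{0}}(\rho)=\log_2(1+\rho\,\phi(0))$ satisfies $\overline{R^{0}}(\rho)>0$.
   Context: Let $G=F^{-1}$ be the quantile function of $F$. For $a\in[0,1]$ define $H_a(x)=(n-1)G(a+(n-1)x)+G(1-x)$ and $c_n(a)=\min\{c\in[0,\tfrac{1-a}{n}]: \int_c^{(1-a)/n}H_a(t)\,dt\ge(\tfrac{1-a}{n}-c)H_a(c)\}$, and $\phi(a)=H_a(c_n(a))$ if $c_n(a)>0$, $\phi(a)=n\,\mathbb{E}[X\mid X>G(a)]$ with $X\sim F$ if $c_n(a)=0$. The quantity $\log_2(1+\rho\phi(\varepsilon))$ is the largest $\varepsilon$-outage capacity $\sup\{R\ge0:\Pr(\sum_{i=1}^n|h_i|^2<(2^R-1)/\rho)<\varepsilon\}$ over all joint distributions of $(|h_1|^2,\dots,|h_n|^2)$ with each $|h_i|^2\sim F$; the zero-outage case is $\varepsilon=0$. *)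

theory Defs
  imports "HOL-Analysis.Analysis"
begin

definition dist_of :: "(real \<Rightarrow> real) \<Rightarrow> real measure" where
  "dist_of f = density lborel (\<lambda>x. ennreal (f x))"

definition cdf_of :: "(real \<Rightarrow> real) \<Rightarrow> real \<Rightarrow> real" where
  "cdf_of f x = measure (dist_of f) {..x}"

text \<open>Quantile function G = F^{-1}, G(p) = inf {x : F x \<ge> p}, taken over the
  support [0,\<infinity>) and with values in [0,\<infinity>] (G(1) = \<infinity> for unbounded support).\<close>
definition quantile :: "(real \<Rightarrow> real) \<Rightarrow> real \<Rightarrow> ennreal" where
  "quantile f p = Inf {ennreal x | x. 0 \<le> x \<and> p \<le> cdf_of f x}"

definition Hfun :: "nat \<Rightarrow> (real \<Rightarrow> real) \<Rightarrow> real \<Rightarrow> real \<Rightarrow> ennreal" where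
  "Hfun n f a x = of_nat (n - 1) * quantile f (a + real (n - 1) * x) + quantile f (1 - x)"

definition cn :: "nat \<Rightarrow> (real \<Rightarrow> real) \<Rightarrow> real \<Rightarrow> real" where
  "cn n f a = Inf {c \<in> {0..(1 - a) / real n}.
      ennreal ((1 - a) / real n - c) * Hfun n f a c
        \<le> (\<integral>\<^sup>+ t \<in> {c..(1 - a) / real n}. Hfun n f a t \<partial>lborel)}"

definition phi :: "nat \<Rightarrow> (real \<Rightarrow> real) \<Rightarrow> real \<Rightarrow> real" where
  "phi n f a =
     (if cn n f a > 0 then enn2real (Hfun n f a (cn n f a))
      else (let g = enn2real (quantile f a) in
            real n * ((\<integral>x \<in> {g<..}. x \<partial>dist_of f) / measure (dist_of f) {g<..})))"

definition best_zero_outage_capacity :: "nat \<Rightarrow> real \<Rightarrow> (real \<Rightarrow> real) \<Rightarrow> real" where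
  "best_zero_outage_capacity n \<rho> f = log 2 (1 + \<rho> * phi n f 0)"

end

theory Submission
  imports Defs "HOL-Probability.Distribution_Functions"
begin

text \<open>Both branches in the definition of \<open>\<phi>(0)\<close> are positive. If \<open>c = c\<^sub>n(0) > 0\<close>, then
  \<open>c \<le> 1/n\<close> keeps both quantile arguments of \<open>H\<^sub>0(c)\<close> strictly between 0 and 1, so
  \<open>H\<^sub>0(c)\<close> is finite, and \<open>G(1 - c) > 0\<close> because \<open>F(0) = 0\<close> and \<open>F\<close> is right-continuous.
  If \<open>c\<^sub>n(0) = 0\<close>, then \<open>G(0) = 0\<close> and \<open>\<phi>(0) = n E[X | X > 0] = n E[X] > 0\<close>.\<close>

lemma cdf_of_eq_cdf: "cdf_of f = cdf (dist_of f)"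
  by (simp add: fun_eq_iff cdf_of_def cdf_def)

lemma real_distribution_dist_of:
  fixes f :: "real \<Rightarrow> real"
  assumes f_nonneg: "\<And>x. f x \<ge> 0" and f_int: "integrable lborel f"
    and f_int_1: "(\<integral>x. f x \<partial>lborel) = 1"
  shows "real_distribution (dist_of f)"
proof -
  have [measurable]: "f \<in> borel_measurable borel"
    using borel_measurable_integrable[OF f_int] by simp
  have "emeasure (dist_of f) UNIV = (\<integral>\<^sup>+ x. ennreal (f x) \<partial>lborel)"
    unfolding dist_of_def by (simp add: emeasure_density)
  also have "\<dots> = 1"
    using nn_integral_eq_integral[OF f_int] f_nonneg f_int_1 by simp
  finally have "emeasure (dist_of f) UNIV = 1" .
  moreover have "sets (dist_of f) = sets borel" "space (dist_of f) = UNIV"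
    unfolding dist_of_def by simp_all
  ultimately show ?thesis
    by (auto simp: real_distribution_def real_distribution_axioms_def
        prob_space_def prob_space_axioms_def intro!: finite_measureI)
qed

lemma cdf_of_0_eq_0:
  fixes f :: "real \<Rightarrow> real"
  assumes f_meas: "f \<in> borel_measurable borel" and f_neg: "\<And>x. x < 0 \<Longrightarrow> f x = 0"
  shows "cdf_of f 0 = 0"
proof -
  have "AE x in lborel. ennreal (f x) * indicator {..0} x = 0"
    using AE_lborel_singleton[of "0::real"]
    by eventually_elim (auto simp: f_neg indicator_def)
  then have "(\<integral>\<^sup>+ x. ennreal (f x) * indicator {..0} x \<partial>lborel) = 0"
    by (subst nn_integral_cong_AE) auto
  then have "emeasure (dist_of f) {..0} = 0"
    unfolding dist_of_def using f_meas by (simp add: emeasure_density)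
  then show ?thesis by (simp add: cdf_of_def measure_def)
qed

lemma quantile_0: "quantile f 0 = 0"
proof -
  have "quantile f 0 \<le> ennreal 0"
    unfolding quantile_def by (rule Inf_lower) (force simp: cdf_of_def)
  then show ?thesis by simp
qed

lemma quantile_less_top:
  assumes "real_distribution (dist_of f)" and "p < 1"
  shows "quantile f p < \<infinity>"
proof -
  interpret real_distribution "dist_of f" by fact
  have "\<forall>\<^sub>F x in at_top. p < cdf (dist_of f) x \<and> 0 \<le> x"
    using order_tendstoD(1)[OF cdf_lim_at_top_prob \<open>p < 1\<close>] eventually_ge_at_top[of 0]
    by eventually_elim auto
  then obtain N where N: "\<And>x. x \<ge> N \<Longrightarrow> p < cdf_of f x \<and> 0 \<le> x"
    unfolding eventually_at_top_linorder cdf_of_eq_cdf by blast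
  have "p \<le> cdf_of f N" "0 \<le> N"
    using N[of N] by auto
  then have "ennreal N \<in> {ennreal x | x. 0 \<le> x \<and> p \<le> cdf_of f x}"
    by blast
  then have "quantile f p \<le> ennreal N"
    unfolding quantile_def by (rule Inf_lower)
  also have "\<dots> < \<infinity>" by simp
  finally show ?thesis .
qed

lemma quantile_pos:
  assumes "real_distribution (dist_of f)" and "cdf_of f 0 = 0" and "0 < p"
  shows "0 < quantile f p"
proof -
  interpret real_distribution "dist_of f" by fact
  have "(cdf (dist_of f) \<longlongrightarrow> 0) (at_right 0)"
    using cdf_is_right_cont[of 0] \<open>cdf_of f 0 = 0\<close>
    by (simp add: continuous_within cdf_of_eq_cdf)
  from order_tendstoD(2)[OF this \<open>0 < p\<close>]
  obtain d where "d > 0" and d: "\<And>y. 0 < y \<Longrightarrow> y < d \<Longrightarrow> cdf_of f y < p"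
    unfolding eventually_at_right_field cdf_of_eq_cdf by auto
  have "ennreal d \<le> quantile f p"
    unfolding quantile_def
  proof (rule Inf_greatest, clarify)
    fix y assume "0 \<le> y" "p \<le> cdf_of f y"
    with d[of y] \<open>cdf_of f 0 = 0\<close> \<open>0 < p\<close> have "d \<le> y"
      by (cases "y = 0") (auto simp: not_le[symmetric])
    then show "ennreal d \<le> ennreal y" by (rule ennreal_leI)
  qed
  moreover have "0 < ennreal d" using \<open>d > 0\<close> by simp
  ultimately show ?thesis by (rule order.strict_trans2[rotated])
qed

lemma cn_bounds:
  assumes "a \<le> 1"
  shows "0 \<le> cn n f a" and "cn n f a \<le> (1 - a) / real n"
proof -
  define S where "S = {c \<in> {0..(1 - a) / real n}.
      ennreal ((1 - a) / real n - c) * Hfun n f a c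
        \<le> (\<integral>\<^sup>+ t \<in> {c..(1 - a) / real n}. Hfun n f a t \<partial>lborel)}"
  have cn_eq: "cn n f a = Inf S" unfolding S_def cn_def ..
  have "(1 - a) / real n \<in> S" unfolding S_def using assms by simp
  moreover have "S \<subseteq> {0..(1 - a) / real n}" unfolding S_def by blast
  ultimately show "0 \<le> cn n f a" "cn n f a \<le> (1 - a) / real n"
    unfolding cn_eq by (auto intro!: cInf_greatest cInf_lower bdd_belowI[of _ 0])
qed

lemma Hfun_pos_finite:
  assumes "real_distribution (dist_of f)" and "cdf_of f 0 = 0"
    and "0 < c" "c < 1" "a + real (n - 1) * c < 1"
  shows "0 < Hfun n f a c" and "Hfun n f a c < \<infinity>"
proof -
  have "0 < quantile f (1 - c)" "quantile f (1 - c) < \<infinity>"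
    using quantile_pos quantile_less_top assms by auto
  moreover have "quantile f (a + real (n - 1) * c) < \<infinity>"
    using quantile_less_top assms by blast
  ultimately show "Hfun n f a c < \<infinity>" and "0 < Hfun n f a c"
    unfolding Hfun_def
    by (auto simp: ennreal_mult_less_top of_nat_less_top)
      (metis add_eq_0_iff_both_eq_0 not_gr_zero)
qed

lemma phi_0_eq_mean_if_cn_0:
  fixes f :: "real \<Rightarrow> real"
  assumes f_nonneg: "\<And>x. f x \<ge> 0" and f_neg: "\<And>x. x < 0 \<Longrightarrow> f x = 0"
    and f_int: "integrable lborel f" and f_int_1: "(\<integral>x. f x \<partial>lborel) = 1"
    and "\<not> cn n f 0 > 0"
  shows "phi n f 0 = real n * (\<integral>x. x * f x \<partial>lborel)"
proof -
  have [measurable]: "f \<in> borel_measurable borel"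
    using borel_measurable_integrable[OF f_int] by simp
  interpret real_distribution "dist_of f"
    using real_distribution_dist_of f_nonneg f_int f_int_1 by blast
  have "measure (dist_of f) {0<..} = 1 - measure (dist_of f) {..0}"
    using prob_compl[of "{..0}"] by (simp add: Compl_eq_Diff_UNIV[symmetric])
  also have "measure (dist_of f) {..0} = 0"
    using cdf_of_0_eq_0[of f] f_neg by (simp add: cdf_of_def)
  finally have prob_pos: "measure (dist_of f) {0<..} = 1" by simp
  have "(\<integral>x \<in> {0<..}. x \<partial>dist_of f) = (\<integral>x. f x *\<^sub>R (indicator {0<..} x *\<^sub>R x) \<partial>lborel)"
    unfolding set_lebesgue_integral_def dist_of_def
    by (rule integral_density) (auto simp: f_nonneg)
  also have "\<dots> = (\<integral>x. x * f x \<partial>lborel)"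
  proof (rule Bochner_Integration.integral_cong)
    fix x :: real
    show "f x *\<^sub>R (indicator {0<..} x *\<^sub>R x) = x * f x"
      using f_neg[of x] by (cases "x > 0"; cases "x = 0") (auto simp: indicator_def)
  qed simp
  finally have "(\<integral>x \<in> {0<..}. x \<partial>dist_of f) = (\<integral>x. x * f x \<partial>lborel)" .
  then show ?thesis
    using \<open>\<not> cn n f 0 > 0\<close> prob_pos by (simp add: phi_def quantile_0)
qed

lemma phi_0_pos:
  fixes f :: "real \<Rightarrow> real"
  assumes "n \<ge> 2"
    and "\<And>x. f x \<ge> 0" and "\<And>x. x < 0 \<Longrightarrow> f x = 0"
    and "integrable lborel f" and "(\<integral>x. f x \<partial>lborel) = 1"
    and "(\<integral>x. x * f x \<partial>lborel) > 0"
  shows "phi n f 0 > 0"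
proof (cases "cn n f 0 > 0")
  case True
  define c where "c = cn n f 0"
  have "c \<le> 1 / real n" using cn_bounds(2)[of 0] by (simp add: c_def)
  also have "\<dots> \<le> 1 / 2" using \<open>n \<ge> 2\<close> by (simp add: field_simps)
  finally have "c < 1" by simp
  have "real (n - 1) * c \<le> real (n - 1) * (1 / real n)"
    using \<open>c \<le> 1 / real n\<close> by (intro mult_left_mono) auto
  also have "\<dots> < 1" using \<open>n \<ge> 2\<close> by (simp add: of_nat_diff field_simps)
  finally have "real (n - 1) * c < 1" .
  have "real_distribution (dist_of f)" "cdf_of f 0 = 0"
    using real_distribution_dist_of cdf_of_0_eq_0 borel_measurable_integrable assms by auto
  with \<open>c < 1\<close> \<open>real (n - 1) * c < 1\<close> have "0 < Hfun n f 0 c" "Hfun n f 0 c < \<infinity>"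
    using Hfun_pos_finite[of f c 0 n] True c_def by auto
  then show ?thesis
    using True by (simp add: phi_def c_def[symmetric] enn2real_positive_iff)
next
  case False
  then show ?thesis
    using phi_0_eq_mean_if_cn_0 assms by simp
qed

theorem proposition1:
  fixes n :: nat and \<rho> :: real and f :: "real \<Rightarrow> real"
  assumes "n \<ge> 2"
    and "\<rho> > 0"
    and "\<And>x. f x \<ge> 0"
    and "\<And>x. x < 0 \<Longrightarrow> f x = 0"
    and "\<And>x y. 0 < x \<Longrightarrow> x \<le> y \<Longrightarrow> f y \<le> f x"
    and "integrable lborel f"
    and "(\<integral>x. f x \<partial>lborel) = 1"
    and "integrable lborel (\<lambda>x. x * f x)"
    and "(\<integral>x. x * f x \<partial>lborel) > 0"
  shows "best_zero_outage_capacity n \<rho> f > 0"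
proof -
  have "phi n f 0 > 0"
    using phi_0_pos[of n f] assms by blast
  with \<open>\<rho> > 0\<close> have "1 < 1 + \<rho> * phi n f 0" by simp
  then show ?thesis
    by (simp add: best_zero_outage_capacity_def)
qed

end
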